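(* For a given diagonal section $\delta$ we have $\mu_\delta=\mu(D_\delta)$, where $D_\delta(x,y)=\overline{C}_\delta(x,y)$ for $x\le y$ and $D_\delta(x,y)=B_\delta(x,y)$ for $x\ge y$.
   Context: A diagonal section is a function $\delta\colon[0,1]\to[0,1]$ that is the diagonal $x\mapsto C(x,x)$ of some bivariate copula $C$; equivalently $\delta(x)\le x$, $0\le\delta(y)-\delta(x)\le 2(y-x)$ for $x\le y$, and $\delta(1)=1$. Write $\widehat{\delta}(x)=x-\delta(x)$. $\overline{C}_\delta(x,y)=\sup\{C(x,y)\colon C \text{ a copula with diagonal section } \delta\}$, and $B_\delta(x,y)=\min\{x,y\}-\min_{t\in[\min\{x,y\},\max\{x,y\}]}\widehat{\delta}(t)$ is the Bertino copula. The function $D_\delta$ (diagonal splice of $\overline{C}_\delta$ and $B_\delta$) is a copula with diagonal section $\delta$. For a copula $C$, its asymmetry is $\mu(C)=\max\{|C(x,y)-C(y,x)|\colon x,y\in[0,1]\}$, and $\mu_\delta=\sup\{\mu(C)\colon C \text{ a copula with diagonal section } \delta\}$ is the maximal asymmetry of copulas with diagonal section $\delta$. *)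

theory Defs
  imports Complex_Main
begin

text \<open>Bivariate copulas, represented as functions real => real => real; only
  their values on the unit square matter.\<close>
definition copula :: "(real \<Rightarrow> real \<Rightarrow> real) \<Rightarrow> bool" where
  "copula C \<longleftrightarrow>
     (\<forall>x\<in>{0..1}. C x 0 = 0 \<and> C 0 x = 0 \<and> C x 1 = x \<and> C 1 x = x) \<and>
     (\<forall>x1\<in>{0..1}. \<forall>x2\<in>{0..1}. \<forall>y1\<in>{0..1}. \<forall>y2\<in>{0..1}.
        x1 \<le> x2 \<longrightarrow> y1 \<le> y2 \<longrightarrow> C x1 y1 + C x2 y2 - C x1 y2 - C x2 y1 \<ge> 0)"

definition has_diagonal :: "(real \<Rightarrow> real \<Rightarrow> real) \<Rightarrow> (real \<Rightarrow> real) \<Rightarrow> bool" where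
  "has_diagonal C \<delta> \<longleftrightarrow> (\<forall>x\<in>{0..1}. C x x = \<delta> x)"

definition diagonal_section :: "(real \<Rightarrow> real) \<Rightarrow> bool" where
  "diagonal_section \<delta> \<longleftrightarrow> (\<exists>C. copula C \<and> has_diagonal C \<delta>)"

definition delta_hat :: "(real \<Rightarrow> real) \<Rightarrow> real \<Rightarrow> real" where
  "delta_hat \<delta> x = x - \<delta> x"

definition C_upper :: "(real \<Rightarrow> real) \<Rightarrow> real \<Rightarrow> real \<Rightarrow> real" where
  "C_upper \<delta> x y = (SUP C\<in>{C. copula C \<and> has_diagonal C \<delta>}. C x y)"

text \<open>Bertino copula (the minimum exists by continuity; written as an infimum).\<close>
definition bertino :: "(real \<Rightarrow> real) \<Rightarrow> real \<Rightarrow> real \<Rightarrow> real" where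
  "bertino \<delta> x y = min x y - (INF t\<in>{min x y..max x y}. delta_hat \<delta> t)"

definition D_splice :: "(real \<Rightarrow> real) \<Rightarrow> real \<Rightarrow> real \<Rightarrow> real" where
  "D_splice \<delta> x y = (if x \<le> y then C_upper \<delta> x y else bertino \<delta> x y)"

text \<open>Asymmetry of a copula (the maximum exists by continuity; written as a supremum).\<close>
definition copula_asym :: "(real \<Rightarrow> real \<Rightarrow> real) \<Rightarrow> real" where
  "copula_asym C = (SUP p\<in>{0..1} \<times> {0..1}. \<bar>C (fst p) (snd p) - C (snd p) (fst p)\<bar>)"

definition max_asym :: "(real \<Rightarrow> real) \<Rightarrow> real" where
  "max_asym \<delta> = (SUP C\<in>{C. copula C \<and> has_diagonal C \<delta>}. copula_asym C)"

end

theory Submission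
  imports Defs
begin

(* Every copula C with diagonal section \<delta> satisfies B\<^sub>\<delta> \<le> C \<le> C_upper \<delta> pointwise, and so does
   its transpose; hence for x < y its asymmetry at (x, y) is at most
   C_upper \<delta> x y - B\<^sub>\<delta> x y, which is exactly the asymmetry of D\<^sub>\<delta> there.  Conversely, gluing
   any such C above the diagonal to B\<^sub>\<delta> below it gives again a copula with diagonal \<delta>,
   whose asymmetry at (x, y) is C x y - B\<^sub>\<delta> x y; letting C x y approach C_upper \<delta> x y shows
   that the asymmetry of D\<^sub>\<delta> is attained in the limit, without having to show that D\<^sub>\<delta>
   itself is a copula. *)

definition rect_volume :: "(real \<Rightarrow> real \<Rightarrow> real) \<Rightarrow> real \<Rightarrow> real \<Rightarrow> real \<Rightarrow> real \<Rightarrow> real" where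
  "rect_volume F x1 x2 y1 y2 = F x1 y1 + F x2 y2 - F x1 y2 - F x2 y1"

lemma copula_boundary:
  assumes "copula C" "x \<in> {0..1}"
  shows "C x 0 = 0" "C 0 x = 0" "C x 1 = x" "C 1 x = x"
  using assms unfolding copula_def by auto

lemma copula_rect_volume_nonneg:
  assumes "copula C" "0 \<le> x1" "x1 \<le> x2" "x2 \<le> 1" "0 \<le> y1" "y1 \<le> y2" "y2 \<le> 1"
  shows "0 \<le> rect_volume C x1 x2 y1 y2"
  using assms unfolding copula_def rect_volume_def by auto

lemma copula_iff_rect_volume:
  "copula C \<longleftrightarrow>
     (\<forall>x\<in>{0..1}. C x 0 = 0 \<and> C 0 x = 0 \<and> C x 1 = x \<and> C 1 x = x) \<and>
     (\<forall>x1 x2 y1 y2. 0 \<le> x1 \<longrightarrow> x1 \<le> x2 \<longrightarrow> x2 \<le> 1 \<longrightarrow> 0 \<le> y1 \<longrightarrow> y1 \<le> y2 \<longrightarrow> y2 \<le> 1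
        \<longrightarrow> 0 \<le> rect_volume C x1 x2 y1 y2)"
  unfolding copula_def rect_volume_def by auto

lemma copula_bounds:
  assumes c: "copula C" and x: "0 \<le> x" "x \<le> 1" and y: "0 \<le> y" "y \<le> 1"
  shows "0 \<le> C x y" "C x y \<le> x" "C x y \<le> y"
  using copula_rect_volume_nonneg[OF c, of 0 x 0 y] copula_rect_volume_nonneg[OF c, of x 1 0 y]
    copula_rect_volume_nonneg[OF c, of 0 x y 1] copula_boundary[OF c] x y
  by (auto simp: rect_volume_def)

lemma copula_mono_right:
  assumes "copula C" "0 \<le> x" "x \<le> 1" "0 \<le> y1" "y1 \<le> y2" "y2 \<le> 1"
  shows "C x y1 \<le> C x y2"
  using copula_rect_volume_nonneg[OF assms(1), of 0 x y1 y2] copula_boundary[OF assms(1)] assms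
  by (auto simp: rect_volume_def)

lemma copula_lipschitz_left:
  assumes "copula C" "0 \<le> x1" "x1 \<le> x2" "x2 \<le> 1" "0 \<le> y" "y \<le> 1"
  shows "C x2 y - C x1 y \<le> x2 - x1"
  using copula_rect_volume_nonneg[OF assms(1), of x1 x2 y 1] copula_boundary[OF assms(1)] assms
  by (auto simp: rect_volume_def)

lemma copula_transpose:
  assumes "copula C"
  shows "copula (\<lambda>x y. C y x)"
  using assms unfolding copula_iff_rect_volume rect_volume_def by (auto simp: algebra_simps)

lemma has_diagonal_transpose: "has_diagonal C \<delta> \<Longrightarrow> has_diagonal (\<lambda>x y. C y x) \<delta>"
  unfolding has_diagonal_def by auto

lemma diagonal_section_endpoints:
  assumes "diagonal_section \<delta>"
  shows "\<delta> 0 = 0" "\<delta> 1 = 1"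
  using assms copula_boundary[of _ 0] copula_boundary[of _ 1]
  unfolding diagonal_section_def has_diagonal_def by fastforce+

lemma delta_hat_nonneg: "diagonal_section \<delta> \<Longrightarrow> 0 \<le> t \<Longrightarrow> t \<le> 1 \<Longrightarrow> 0 \<le> delta_hat \<delta> t"
  using copula_bounds(2)[of _ t t] unfolding diagonal_section_def has_diagonal_def delta_hat_def
  by fastforce

lemma bdd_below_delta_hat:
  "diagonal_section \<delta> \<Longrightarrow> 0 \<le> a \<Longrightarrow> b \<le> 1 \<Longrightarrow> bdd_below (delta_hat \<delta> ` {a..b})"
  by (rule bdd_belowI2[where m = 0]) (auto intro: delta_hat_nonneg)

lemma bertino_commute: "bertino \<delta> x y = bertino \<delta> y x"
  by (simp add: bertino_def min.commute max.commute)

lemma bertino_diag: "bertino \<delta> x x = \<delta> x"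
  by (simp add: bertino_def delta_hat_def)

lemma bertino_le_copula_upper:
  assumes c: "copula C" "has_diagonal C \<delta>" and xy: "0 \<le> x" "x \<le> y" "y \<le> 1"
  shows "bertino \<delta> x y \<le> C x y"
proof -
  have "x - C x y \<le> (INF t\<in>{x..y}. delta_hat \<delta> t)"
  proof (rule cINF_greatest)
    fix t assume t: "t \<in> {x..y}"
    have "C x t \<le> C x y" using copula_mono_right[OF c(1), of x t y] t xy by auto
    moreover have "C t t - C x t \<le> t - x" using copula_lipschitz_left[OF c(1), of x t t] t xy by auto
    moreover have "C t t = \<delta> t" using c(2) t xy unfolding has_diagonal_def by auto
    ultimately show "x - C x y \<le> delta_hat \<delta> t" unfolding delta_hat_def by linarith
  qed (use xy in auto)
  then show ?thesis using xy unfolding bertino_def by auto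
qed

lemma bertino_le_copula:
  assumes c: "copula C" "has_diagonal C \<delta>" and xy: "0 \<le> x" "x \<le> 1" "0 \<le> y" "y \<le> 1"
  shows "bertino \<delta> x y \<le> C x y"
proof (cases "x \<le> y")
  case True
  then show ?thesis using bertino_le_copula_upper[OF c] xy by auto
next
  case False
  then show ?thesis
    using bertino_le_copula_upper[OF copula_transpose[OF c(1)] has_diagonal_transpose[OF c(2)], of y x] xy
    by (simp add: bertino_commute)
qed

lemma bertino_boundary:
  assumes d: "diagonal_section \<delta>" and x: "0 \<le> x" "x \<le> 1"
  shows "bertino \<delta> x 0 = 0" "bertino \<delta> 1 x = x"
proof -
  have "(INF t\<in>{a..b}. delta_hat \<delta> t) = 0"
    if "0 \<le> a" "a \<le> b" "b \<le> 1" "delta_hat \<delta> a = 0 \<or> delta_hat \<delta> b = 0" for a b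
  proof (rule antisym)
    show "(INF t\<in>{a..b}. delta_hat \<delta> t) \<le> 0"
      using that cINF_lower[OF bdd_below_delta_hat[OF d], of a b] by fastforce
    show "0 \<le> (INF t\<in>{a..b}. delta_hat \<delta> t)"
      by (rule cINF_greatest) (use that delta_hat_nonneg[OF d] in auto)
  qed
  then show "bertino \<delta> x 0 = 0" "bertino \<delta> 1 x = x"
    using x diagonal_section_endpoints[OF d] by (auto simp: bertino_def delta_hat_def)
qed

lemma bertino_rect_volume_nonneg_below_diagonal:
  assumes d: "diagonal_section \<delta>"
    and o: "0 \<le> y1" "y1 \<le> y2" "y2 \<le> x1" "x1 \<le> x2" "x2 \<le> 1"
  shows "0 \<le> rect_volume (bertino \<delta>) x1 x2 y1 y2"
proof -
  define m where "m a b = (INF t\<in>{a..b}. delta_hat \<delta> t)" for a b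
  have B: "bertino \<delta> x y = y - m y x" if "y \<le> x" for x y
    using that unfolding bertino_def m_def by (simp add: min_def max_def)
  have bdd: "bdd_below (delta_hat \<delta> ` {a..b})" if "0 \<le> a" "b \<le> 1" for a b
    using bdd_below_delta_hat[OF d that] .
  have "m y1 x1 \<le> m y2 x1" "m y2 x2 \<le> m y2 x1" unfolding m_def
    by (rule cINF_superset_mono; use o bdd in auto)+
  moreover have "min (m y1 x1) (m y2 x2) \<le> m y1 x2"
    \<comment> \<open>{y1..x2} is covered by {y1..x1} and {y2..x2}\<close>
    unfolding m_def
  proof (rule cINF_greatest)
    fix t assume t: "t \<in> {y1..x2}"
    then have "(INF s\<in>{y1..x1}. delta_hat \<delta> s) \<le> delta_hat \<delta> t \<or>
               (INF s\<in>{y2..x2}. delta_hat \<delta> s) \<le> delta_hat \<delta> t"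
      using o by (cases "t \<le> x1") (auto intro!: cINF_lower bdd)
    then show "min (INF s\<in>{y1..x1}. delta_hat \<delta> s) (INF s\<in>{y2..x2}. delta_hat \<delta> s) \<le> delta_hat \<delta> t"
      by linarith
  qed (use o in auto)
  ultimately show ?thesis
    using B[of y1 x1] B[of y2 x2] B[of y2 x1] B[of y1 x2] o unfolding rect_volume_def
    by (auto simp: min_def split: if_splits)
qed

text \<open>A rectangle meeting the diagonal is cut by the lines x, y \<in> {max x1 y1, min x2 y2} into
  pieces lying on one side of the diagonal, a square on the diagonal, and two degenerate corners.\<close>
lemma rect_volume_nonneg_by_triangles:
  assumes above: "\<And>x1 x2 y1 y2. 0 \<le> x1 \<Longrightarrow> x1 \<le> x2 \<Longrightarrow> x2 \<le> y1 \<Longrightarrow> y1 \<le> y2 \<Longrightarrow> y2 \<le> 1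
      \<Longrightarrow> 0 \<le> rect_volume F x1 x2 y1 y2"
    and below: "\<And>x1 x2 y1 y2. 0 \<le> y1 \<Longrightarrow> y1 \<le> y2 \<Longrightarrow> y2 \<le> x1 \<Longrightarrow> x1 \<le> x2 \<Longrightarrow> x2 \<le> 1
      \<Longrightarrow> 0 \<le> rect_volume F x1 x2 y1 y2"
    and square: "\<And>a b. 0 \<le> a \<Longrightarrow> a \<le> b \<Longrightarrow> b \<le> 1 \<Longrightarrow> 0 \<le> rect_volume F a b a b"
    and r: "0 \<le> x1" "x1 \<le> x2" "x2 \<le> 1" "0 \<le> y1" "y1 \<le> y2" "y2 \<le> 1"
  shows "0 \<le> rect_volume F x1 x2 y1 y2"
proof (cases "x2 \<le> y1 \<or> y2 \<le> x1")
  case True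
  then show ?thesis using above below r by auto
next
  case False
  define a where "a = max x1 y1"
  define b where "b = min x2 y2"
  have ab: "x1 \<le> a" "y1 \<le> a" "a \<le> b" "b \<le> x2" "b \<le> y2"
    using False r unfolding a_def b_def by auto
  have "rect_volume F x1 a y1 a = 0" "rect_volume F b x2 b y2 = 0"
    unfolding a_def b_def rect_volume_def by (auto simp: max_def min_def)
  moreover have "0 \<le> rect_volume F x1 a a b" "0 \<le> rect_volume F x1 a b y2"
    "0 \<le> rect_volume F a b b y2" using above ab r by auto
  moreover have "0 \<le> rect_volume F a b y1 a" "0 \<le> rect_volume F b x2 y1 a"
    "0 \<le> rect_volume F b x2 a b" using below ab r by auto
  moreover have "0 \<le> rect_volume F a b a b" using square ab r by auto
  ultimately show ?thesis unfolding rect_volume_def by linarith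
qed

definition bertino_splice :: "(real \<Rightarrow> real \<Rightarrow> real) \<Rightarrow> (real \<Rightarrow> real) \<Rightarrow> real \<Rightarrow> real \<Rightarrow> real" where
  "bertino_splice C \<delta> x y = (if x \<le> y then C x y else bertino \<delta> x y)"

lemma D_splice_eq_bertino_splice: "D_splice \<delta> = bertino_splice (C_upper \<delta>) \<delta>"
  by (intro ext) (simp add: D_splice_def bertino_splice_def)

lemma has_diagonal_bertino_splice: "has_diagonal C \<delta> \<Longrightarrow> has_diagonal (bertino_splice C \<delta>) \<delta>"
  unfolding has_diagonal_def bertino_splice_def by auto

lemma bertino_splice_below_diagonal:
  "has_diagonal C \<delta> \<Longrightarrow> y \<le> x \<Longrightarrow> x \<in> {0..1} \<Longrightarrow> bertino_splice C \<delta> x y = bertino \<delta> x y"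
  unfolding bertino_splice_def has_diagonal_def by (auto simp: bertino_diag)

lemma copula_bertino_splice:
  assumes c: "copula C" "has_diagonal C \<delta>"
  shows "copula (bertino_splice C \<delta>)"
proof -
  have d: "diagonal_section \<delta>" using c unfolding diagonal_section_def by auto
  have "0 \<le> rect_volume (bertino_splice C \<delta>) x1 x2 y1 y2"
    if r: "0 \<le> x1" "x1 \<le> x2" "x2 \<le> 1" "0 \<le> y1" "y1 \<le> y2" "y2 \<le> 1" for x1 x2 y1 y2
  proof (rule rect_volume_nonneg_by_triangles[OF _ _ _ r])
    fix x1 x2 y1 y2 :: real
    assume "0 \<le> x1" "x1 \<le> x2" "x2 \<le> y1" "y1 \<le> y2" "y2 \<le> 1"
    then show "0 \<le> rect_volume (bertino_splice C \<delta>) x1 x2 y1 y2"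
      using copula_rect_volume_nonneg[OF c(1), of x1 x2 y1 y2]
      by (simp add: rect_volume_def bertino_splice_def)
  next
    fix x1 x2 y1 y2 :: real
    assume o: "0 \<le> y1" "y1 \<le> y2" "y2 \<le> x1" "x1 \<le> x2" "x2 \<le> 1"
    then show "0 \<le> rect_volume (bertino_splice C \<delta>) x1 x2 y1 y2"
      using bertino_rect_volume_nonneg_below_diagonal[OF d o] bertino_splice_below_diagonal[OF c(2)]
      by (simp add: rect_volume_def)
  next
    fix a b :: real
    assume o: "0 \<le> a" "a \<le> b" "b \<le> 1"
    then show "0 \<le> rect_volume (bertino_splice C \<delta>) a b a b"
      using copula_rect_volume_nonneg[OF c(1), of a b a b] bertino_le_copula[OF c, of b a]
        bertino_splice_below_diagonal[OF c(2), of a b]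
      by (simp add: rect_volume_def bertino_splice_def)
  qed
  then show ?thesis
    unfolding copula_iff_rect_volume
    using copula_boundary[OF c(1)] bertino_boundary[OF d] by (auto simp: bertino_splice_def)
qed

lemma bdd_above_copula_values:
  assumes "x \<in> {0..1}" "y \<in> {0..1}"
  shows "bdd_above ((\<lambda>C. C x y) ` {C. copula C \<and> has_diagonal C \<delta>})"
proof (rule bdd_aboveI2[where M = 1])
  fix C assume "C \<in> {C. copula C \<and> has_diagonal C \<delta>}"
  then show "C x y \<le> 1" using copula_bounds(2)[of C x y] assms by auto
qed

lemma copula_le_C_upper:
  assumes "copula C" "has_diagonal C \<delta>" "x \<in> {0..1}" "y \<in> {0..1}"
  shows "C x y \<le> C_upper \<delta> x y"
  unfolding C_upper_def by (rule cSUP_upper) (use assms bdd_above_copula_values in auto)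

lemma C_upper_approx:
  assumes "diagonal_section \<delta>" "x \<in> {0..1}" "y \<in> {0..1}" "0 < e"
  obtains C where "copula C" "has_diagonal C \<delta>" "C_upper \<delta> x y - e < C x y"
proof -
  have "{C. copula C \<and> has_diagonal C \<delta>} \<noteq> {}"
    using assms(1) unfolding diagonal_section_def by auto
  moreover have "C_upper \<delta> x y - e < (SUP C\<in>{C. copula C \<and> has_diagonal C \<delta>}. C x y)"
    using assms(4) by (simp add: C_upper_def)
  ultimately have "\<exists>C\<in>{C. copula C \<and> has_diagonal C \<delta>}. C_upper \<delta> x y - e < C x y"
    using less_cSUP_iff[OF _ bdd_above_copula_values[OF assms(2,3)]] by blast
  then show ?thesis using that by blast
qed

definition asym_gap :: "(real \<Rightarrow> real \<Rightarrow> real) \<Rightarrow> real \<Rightarrow> real \<Rightarrow> real" where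
  "asym_gap F x y = \<bar>F x y - F y x\<bar>"

lemma asym_gap_commute: "asym_gap F x y = asym_gap F y x"
  unfolding asym_gap_def by simp

lemma asym_gap_le_from_upper_triangle:
  assumes "\<And>x y. 0 \<le> x \<Longrightarrow> x < y \<Longrightarrow> y \<le> 1 \<Longrightarrow> asym_gap F x y \<le> g x y"
    and "\<And>x y. g x y = g y x" "\<And>x. 0 \<le> g x x"
    and "x \<in> {0..1}" "y \<in> {0..1}"
  shows "asym_gap F x y \<le> g x y"
proof (cases x y rule: linorder_cases)
  case less
  then show ?thesis using assms(1,4,5) by auto
next
  case equal
  then show ?thesis using assms(3) by (simp add: asym_gap_def)
next
  case greater
  then have "asym_gap F y x \<le> g y x" using assms(1)[of y x] assms(4,5) by auto
  then show ?thesis by (metis asym_gap_commute assms(2))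
qed

lemma asym_gap_le_copula_asym:
  assumes "\<And>x y. x \<in> {0..1} \<Longrightarrow> y \<in> {0..1} \<Longrightarrow> asym_gap F x y \<le> K"
    and "x \<in> {0..1}" "y \<in> {0..1}"
  shows "asym_gap F x y \<le> copula_asym F"
proof -
  have "bdd_above ((\<lambda>p. asym_gap F (fst p) (snd p)) ` ({0..1} \<times> {0..1}))"
    by (rule bdd_aboveI2[where M = K]) (use assms(1) in auto)
  then have "(\<lambda>p. asym_gap F (fst p) (snd p)) (x, y) \<le> (SUP p\<in>{0..1} \<times> {0..1}. asym_gap F (fst p) (snd p))"
    by (rule cSUP_upper[rotated]) (use assms(2,3) in auto)
  then show ?thesis by (simp add: copula_asym_def asym_gap_def)
qed

lemma copula_asym_least:
  assumes "\<And>x y. x \<in> {0..1} \<Longrightarrow> y \<in> {0..1} \<Longrightarrow> asym_gap F x y \<le> M"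
  shows "copula_asym F \<le> M"
  unfolding copula_asym_def by (rule cSUP_least) (use assms in \<open>auto simp: asym_gap_def\<close>)

lemma asym_gap_copula_le_one: "copula C \<Longrightarrow> x \<in> {0..1} \<Longrightarrow> y \<in> {0..1} \<Longrightarrow> asym_gap C x y \<le> 1"
  using copula_bounds[of C x y] copula_bounds[of C y x] by (auto simp: asym_gap_def)

lemma copula_asym_ge_asym_gap:
  assumes "copula C" "x \<in> {0..1}" "y \<in> {0..1}"
  shows "asym_gap C x y \<le> copula_asym C"
  by (rule asym_gap_le_copula_asym[where K = 1]) (use assms asym_gap_copula_le_one in auto)

lemma copula_asym_le_max_asym:
  assumes "copula C" "has_diagonal C \<delta>"
  shows "copula_asym C \<le> max_asym \<delta>"
  unfolding max_asym_def
proof (rule cSUP_upper)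
  show "bdd_above (copula_asym ` {C. copula C \<and> has_diagonal C \<delta>})"
    by (rule bdd_aboveI2[where M = 1]) (auto intro: copula_asym_least asym_gap_copula_le_one)
qed (use assms in auto)

lemma max_asym_nonneg: "diagonal_section \<delta> \<Longrightarrow> 0 \<le> max_asym \<delta>"
  unfolding diagonal_section_def
  using copula_asym_ge_asym_gap[of _ 0 0] copula_asym_le_max_asym
  by (fastforce simp: asym_gap_def)

lemma asym_gap_bertino_splice:
  "x < y \<Longrightarrow> bertino \<delta> x y \<le> C x y \<Longrightarrow> asym_gap (bertino_splice C \<delta>) x y = C x y - bertino \<delta> x y"
  by (simp add: asym_gap_def bertino_splice_def bertino_commute)

lemma asym_gap_le_D_splice:
  assumes c: "copula C" "has_diagonal C \<delta>" and xy: "0 \<le> x" "x < y" "y \<le> 1"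
  shows "asym_gap C x y \<le> asym_gap (D_splice \<delta>) x y"
proof -
  have "bertino \<delta> x y \<le> C x y" "bertino \<delta> x y \<le> C y x"
    using bertino_le_copula[OF c, of x y] bertino_le_copula[OF c, of y x] xy
    by (auto simp: bertino_commute)
  moreover have "C x y \<le> C_upper \<delta> x y" "C y x \<le> C_upper \<delta> x y"
    using copula_le_C_upper[OF c, of x y] xy
      copula_le_C_upper[OF copula_transpose[OF c(1)] has_diagonal_transpose[OF c(2)], of x y]
    by auto
  ultimately show ?thesis
    unfolding D_splice_eq_bertino_splice
    using asym_gap_bertino_splice[of x y \<delta> "C_upper \<delta>"] xy by (auto simp: asym_gap_def)
qed

lemma asym_gap_D_splice_le_max_asym:
  assumes d: "diagonal_section \<delta>" and xy: "0 \<le> x" "x < y" "y \<le> 1"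
  shows "asym_gap (D_splice \<delta>) x y \<le> max_asym \<delta>"
proof (rule field_le_epsilon)
  fix e :: real
  assume "0 < e"
  with d xy obtain C where c: "copula C" "has_diagonal C \<delta>" and close: "C_upper \<delta> x y - e < C x y"
    by (auto elim: C_upper_approx[of \<delta> x y e])
  have "bertino \<delta> x y \<le> C x y" using bertino_le_copula[OF c] xy by auto
  moreover have "C x y \<le> C_upper \<delta> x y" using copula_le_C_upper[OF c] xy by auto
  moreover have "asym_gap (bertino_splice C \<delta>) x y \<le> max_asym \<delta>"
    using copula_asym_ge_asym_gap[OF copula_bertino_splice[OF c], of x y] xy
      copula_asym_le_max_asym[OF copula_bertino_splice[OF c] has_diagonal_bertino_splice[OF c(2)]]
    by auto
  ultimately show "asym_gap (D_splice \<delta>) x y \<le> max_asym \<delta> + e"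
    unfolding D_splice_eq_bertino_splice
    using asym_gap_bertino_splice[of x y \<delta>] close xy by auto
qed

theorem corollary4p4:
  fixes \<delta> :: "real \<Rightarrow> real"
  assumes "diagonal_section \<delta>"
  shows "max_asym \<delta> = copula_asym (D_splice \<delta>)"
proof -
  have D_le_max: "asym_gap (D_splice \<delta>) x y \<le> max_asym \<delta>" if "x \<in> {0..1}" "y \<in> {0..1}" for x y
    using asym_gap_le_from_upper_triangle[OF asym_gap_D_splice_le_max_asym[OF assms] _ _ that]
      max_asym_nonneg[OF assms] by auto
  have C_le_D: "asym_gap C x y \<le> asym_gap (D_splice \<delta>) x y"
    if "copula C" "has_diagonal C \<delta>" "x \<in> {0..1}" "y \<in> {0..1}" for C x y
    using asym_gap_le_from_upper_triangle[OF asym_gap_le_D_splice[OF that(1,2)] _ _ that(3,4)]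
    by (auto simp: asym_gap_commute asym_gap_def)
  show ?thesis
  proof (rule antisym)
    show "max_asym \<delta> \<le> copula_asym (D_splice \<delta>)"
      unfolding max_asym_def
    proof (rule cSUP_least)
      fix C assume "C \<in> {C. copula C \<and> has_diagonal C \<delta>}"
      then show "copula_asym C \<le> copula_asym (D_splice \<delta>)"
        using C_le_D asym_gap_le_copula_asym[OF D_le_max] by (blast intro: copula_asym_least order_trans)
    qed (use assms in \<open>auto simp: diagonal_section_def\<close>)
    show "copula_asym (D_splice \<delta>) \<le> max_asym \<delta>"
      using D_le_max by (rule copula_asym_least)
  qed
qed

end
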